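(* Let $k\ge 2$, let $B=M\cup\{\omega_1,\ldots,\omega_p\}$ with $p\ge 1$ and $\omega_1,\ldots,\omega_p\in P_k\setminus M$, and let $F$ be a finite system of functions from $P_k(n)$. Then $$I_B(F)\ge\left\lceil \log_{d(B)+1}\bigl(d(F)+1\bigr)\right\rceil .$$
   Context: Let $k\ge 2$ be an integer and $E_k=\{0,1,\ldots,k-1\}$. $P_k(n)$ denotes the set of all functions $E_k^n\to E_k$, and $P_k=\bigcup_n P_k(n)$. Tuples in $E_k^n$ are ordered componentwise: $\tilde\alpha\le\tilde\beta$ iff $\alpha_j\le\beta_j$ for all $j$. A function $f$ is monotone if $\tilde\alpha\le\tilde\beta$ implies $f(\tilde\alpha)\le f(\tilde\beta)$; $M$ is the set of all monotone functions in $P_k$ (of all arities, including constants). A basis is a set $B=M\cup\{\omega_1,\ldots,\omega_p\}$ with $p\ge1$ and $\omega_i\in P_k\setminus M$. A circuit over $B$ with inputs $x_1,\ldots,x_n$ is a finite directed acyclic graph whose source nodes are labelled by the variables $x_1,\ldots,x_n$ and each of whose other nodes (gates) is labelled by a $q$-ary function from $B$ and has $q$ ordered incoming edges; each node computes a function of $P_k(n)$ in the obvious way. A circuit realizes a system $F$ of functions of $x_1,\ldots,x_n$ if every function of $F$ is computed at some node. Gates labelled by functions of $M$ have weight $0$, gates labelled by some $\omega_i$ have weight $1$. The non-monotone complexity $I_B(S)$ of a circuit $S$ is the sum of the weights of its gates; $I_B(F)$ is the minimum of $I_B(S)$ over all circuits $S$ over $B$ realizing $F$, and $I_B(f)=I_B(\{f\})$.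 A chain is a sequence $\tilde\alpha_1,\ldots,\tilde\alpha_r$ of pairwise distinct tuples of $E_k^n$ with $\tilde\alpha_i\le\tilde\alpha_{i+1}$ for $i=1,\ldots,r-1$. A pair $(\tilde\alpha,\tilde\beta)$ with $\tilde\alpha\le\tilde\beta$ is a jump for a system $F$ if $f(\tilde\alpha)>f(\tilde\beta)$ for at least one $f\in F$. For a chain $C=(\tilde\alpha_1,\ldots,\tilde\alpha_r)$, the decrease $d_C(F)$ is the number of $i\in\{1,\ldots,r-1\}$ such that $(\tilde\alpha_i,\tilde\alpha_{i+1})$ is a jump for $F$. The decrease $d(F)$ is the maximum of $d_C(F)$ over all chains $C$ in $E_k^n$; $d(f)=d(\{f\})$. Finally $d(B)=\max\{d(\omega_1),\ldots,d(\omega_p)\}$. *)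

theory Defs
  imports Complex_Main "HOL-Library.Extended_Nat"
begin

text \<open>Tuples of E_k^n are lists of length n with entries below k.
  A function of P_k(n) is represented by a map on lists; only its values on E_k^n matter.\<close>

definition tuples :: "nat \<Rightarrow> nat \<Rightarrow> nat list set" where
  "tuples k n = {xs. length xs = n \<and> (\<forall>x\<in>set xs. x < k)}"

definition tle :: "nat list \<Rightarrow> nat list \<Rightarrow> bool" where
  "tle a b \<longleftrightarrow> list_all2 (\<le>) a b"

definition in_P :: "nat \<Rightarrow> nat \<Rightarrow> (nat list \<Rightarrow> nat) \<Rightarrow> bool" where
  "in_P k n f \<longleftrightarrow> (\<forall>xs\<in>tuples k n. f xs < k)"

definition monotone_fun :: "nat \<Rightarrow> nat \<Rightarrow> (nat list \<Rightarrow> nat) \<Rightarrow> bool" where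
  "monotone_fun k n f \<longleftrightarrow>
     (\<forall>a\<in>tuples k n. \<forall>b\<in>tuples k n. tle a b \<longrightarrow> f a \<le> f b)"

text \<open>Circuits: nodes 0..n-1 are the inputs x_1..x_n; gate j is node n+j and may only
  read nodes with smaller index (topological order of the DAG).
  MGate g args: gate labelled by a monotone function g (weight 0);
  OGate i args: gate labelled by omega_i (weight 1).\<close>

datatype gate = MGate "nat list \<Rightarrow> nat" "nat list" | OGate nat "nat list"

fun gate_args :: "gate \<Rightarrow> nat list" where
  "gate_args (MGate g as) = as"
| "gate_args (OGate i as) = as"

fun gate_apply :: "(nat \<Rightarrow> nat list \<Rightarrow> nat) \<Rightarrow> gate \<Rightarrow> nat list \<Rightarrow> nat" where
  "gate_apply \<omega> (MGate g as) vals = g (map (\<lambda>j. vals ! j) as)"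
| "gate_apply \<omega> (OGate i as) vals = \<omega> i (map (\<lambda>j. vals ! j) as)"

definition circ_vals :: "(nat \<Rightarrow> nat list \<Rightarrow> nat) \<Rightarrow> gate list \<Rightarrow> nat list \<Rightarrow> nat list" where
  "circ_vals \<omega> gs xs = foldl (\<lambda>vals g. vals @ [gate_apply \<omega> g vals]) xs gs"

fun gate_ok :: "nat \<Rightarrow> nat \<Rightarrow> (nat \<Rightarrow> nat) \<Rightarrow> gate \<Rightarrow> bool" where
  "gate_ok k p ar (MGate g as) \<longleftrightarrow> in_P k (length as) g \<and> monotone_fun k (length as) g"
| "gate_ok k p ar (OGate i as) \<longleftrightarrow> i < p \<and> length as = ar i"

definition wf_circuit :: "nat \<Rightarrow> nat \<Rightarrow> (nat \<Rightarrow> nat) \<Rightarrow> nat \<Rightarrow> gate list \<Rightarrow> bool" where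
  "wf_circuit k p ar n gs \<longleftrightarrow>
     (\<forall>j<length gs. gate_ok k p ar (gs ! j) \<and> (\<forall>a\<in>set (gate_args (gs ! j)). a < n + j))"

fun is_omega_gate :: "gate \<Rightarrow> bool" where
  "is_omega_gate (MGate g as) = False"
| "is_omega_gate (OGate i as) = True"

definition circ_cost :: "gate list \<Rightarrow> nat" where
  "circ_cost gs = length (filter is_omega_gate gs)"

definition realizes ::
  "nat \<Rightarrow> (nat \<Rightarrow> nat list \<Rightarrow> nat) \<Rightarrow> nat \<Rightarrow> gate list \<Rightarrow> (nat list \<Rightarrow> nat) set \<Rightarrow> bool" where
  "realizes k \<omega> n gs F \<longleftrightarrow>
     (\<forall>f\<in>F. \<exists>v < n + length gs. \<forall>xs\<in>tuples k n. circ_vals \<omega> gs xs ! v = f xs)"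

text \<open>Non-monotone complexity I_B(F) (infinite if F is not realizable).\<close>
definition I_B ::
  "nat \<Rightarrow> nat \<Rightarrow> (nat \<Rightarrow> nat list \<Rightarrow> nat) \<Rightarrow> (nat \<Rightarrow> nat) \<Rightarrow> nat \<Rightarrow> (nat list \<Rightarrow> nat) set \<Rightarrow> enat" where
  "I_B k p \<omega> ar n F =
     (INF gs \<in> {gs. wf_circuit k p ar n gs \<and> realizes k \<omega> n gs F}. enat (circ_cost gs))"

definition is_chain :: "nat \<Rightarrow> nat \<Rightarrow> nat list list \<Rightarrow> bool" where
  "is_chain k n c \<longleftrightarrow> set c \<subseteq> tuples k n \<and> distinct c \<and>
     (\<forall>i. Suc i < length c \<longrightarrow> tle (c ! i) (c ! Suc i))"

definition is_jump :: "(nat list \<Rightarrow> nat) set \<Rightarrow> nat list \<Rightarrow> nat list \<Rightarrow> bool" where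
  "is_jump F a b \<longleftrightarrow> tle a b \<and> (\<exists>f\<in>F. f a > f b)"

definition chain_decrease :: "(nat list \<Rightarrow> nat) set \<Rightarrow> nat list list \<Rightarrow> nat" where
  "chain_decrease F c = card {i. Suc i < length c \<and> is_jump F (c ! i) (c ! Suc i)}"

definition decrease :: "nat \<Rightarrow> nat \<Rightarrow> (nat list \<Rightarrow> nat) set \<Rightarrow> nat" where
  "decrease k n F = Max {chain_decrease F c | c. is_chain k n c}"

definition decrease_B :: "nat \<Rightarrow> nat \<Rightarrow> (nat \<Rightarrow> nat list \<Rightarrow> nat) \<Rightarrow> (nat \<Rightarrow> nat) \<Rightarrow> nat" where
  "decrease_B k p \<omega> ar = Max {decrease k (ar i) {\<omega> i} | i. i < p}"

end

theory Submission
  imports Defs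
begin

text \<open>Fix a chain \<open>x\<^sub>0 \<le> \<dots> \<le> x\<^sub>r\<close> and a circuit, and call \<open>i\<close> a break if the vector of all
  node values at \<open>x\<^sub>i\<close> is not below the one at \<open>x\<^sub>i\<^sub>+\<^sub>1\<close>. Every jump of \<open>F\<close> is a break.
  Adding a monotone gate creates no new breaks. Adding a gate \<open>\<omega>\<^sub>j\<close> with \<open>b\<close> existing breaks:
  between consecutive breaks the inputs of the gate grow monotonically, so on each of the
  \<open>b + 1\<close> pieces \<open>\<omega>\<^sub>j\<close> decreases at most \<open>d(B)\<close> times. Hence \<open>b + 1\<close> grows by at most
  the factor \<open>d(B) + 1\<close> per gate \<open>\<omega>\<^sub>j\<close>, and \<open>d(F) + 1 \<le> (d(B) + 1)\<^bsup>I\<^sub>B(F)\<^esup>\<close>.\<close>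

lemma tle_refl: "tle a a"
  unfolding tle_def by (simp add: list_all2_refl)

lemma tle_trans: "tle a b \<Longrightarrow> tle b c \<Longrightarrow> tle a c"
  unfolding tle_def using list_all2_trans[of "(\<le>)" "(\<le>)" "(\<le>)"] order_trans by blast

lemma tle_antisym: "tle a b \<Longrightarrow> tle b a \<Longrightarrow> a = b"
  unfolding tle_def by (rule list_all2_antisym) auto

lemma tle_append_singleton:
  "length u = length u' \<Longrightarrow> tle (u @ [a]) (u' @ [b]) \<longleftrightarrow> tle u u' \<and> a \<le> b"
  unfolding tle_def by (simp add: list_all2_append)

lemma tle_nth: "tle u u' \<Longrightarrow> v < length u \<Longrightarrow> u ! v \<le> u' ! v"
  unfolding tle_def by (simp add: list_all2_conv_all_nth)

lemma tle_map_nth: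
  "tle u u' \<Longrightarrow> \<forall>a\<in>set as. a < length u \<Longrightarrow> tle (map (\<lambda>j. u ! j) as) (map (\<lambda>j. u' ! j) as)"
  unfolding tle_def by (auto simp add: list_all2_conv_all_nth)

lemma map_nth_in_tuples:
  "u \<in> tuples k m \<Longrightarrow> \<forall>a\<in>set as. a < m \<Longrightarrow> map (\<lambda>j. u ! j) as \<in> tuples k (length as)"
  unfolding tuples_def by auto

lemma finite_tuples: "finite (tuples k n)"
proof (rule finite_subset)
  show "tuples k n \<subseteq> {xs. set xs \<subseteq> {..<k} \<and> length xs = n}"
    unfolding tuples_def by auto
  show "finite {xs. set xs \<subseteq> {..<k} \<and> length xs = n}"
    by (rule finite_lists_length_eq) simp
qed

lemma chain_decrease_le_card_tuples:
  assumes "is_chain k m c" shows "chain_decrease F c \<le> card (tuples k m)"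
proof -
  have "chain_decrease F c \<le> card {..<length c}"
    unfolding chain_decrease_def by (rule card_mono) auto
  also have "\<dots> \<le> card (tuples k m)"
    using assms unfolding is_chain_def by (metis card_lessThan card_mono distinct_card finite_tuples)
  finally show ?thesis .
qed

lemma finite_chain_decreases: "finite {chain_decrease F c | c. is_chain k m c}"
  by (rule finite_subset[of _ "{..card (tuples k m)}"])
    (auto simp: chain_decrease_le_card_tuples)

lemma chain_decrease_le_decrease: "is_chain k m c \<Longrightarrow> chain_decrease F c \<le> decrease k m F"
  unfolding decrease_def using finite_chain_decreases by (auto intro: Max_ge)

lemma decrease_attained: obtains c where "is_chain k m c" "chain_decrease F c = decrease k m F"
proof -
  have "is_chain k m []" by (simp add: is_chain_def)
  then have "decrease k m F \<in> {chain_decrease F c | c. is_chain k m c}"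
    unfolding decrease_def using finite_chain_decreases by (intro Max_in) auto
  then show ?thesis using that by auto
qed

lemma chain_decrease_snoc:
  assumes "c \<noteq> []"
  shows "chain_decrease {f} (c @ [y]) =
    chain_decrease {f} c + (if tle (last c) y \<and> f y < f (last c) then 1 else 0)"
proof -
  let ?J = "\<lambda>c. {i. Suc i < length c \<and> is_jump {f} (c ! i) (c ! Suc i)}"
  have last: "c ! (length c - 1) = last c" using assms by (simp add: last_conv_nth)
  have "i \<in> ?J (c @ [y]) \<longleftrightarrow>
      i \<in> ?J c \<or> (i = length c - 1 \<and> tle (last c) y \<and> f y < f (last c))" for i
  proof (cases "Suc i < length c")
    case True
    then show ?thesis by (auto simp: nth_append)
  next
    case False
    then show ?thesis using assms last by (cases "i = length c - 1") (auto simp: nth_append is_jump_def)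
  qed
  then have "?J (c @ [y]) = ?J c \<union> (if tle (last c) y \<and> f y < f (last c) then {length c - 1} else {})"
    by auto
  moreover have "length c - 1 \<notin> ?J c" using assms by auto
  moreover have "finite (?J c)" by (rule finite_subset[of _ "{..<length c}"]) auto
  ultimately show ?thesis unfolding chain_decrease_def by simp
qed

definition descents :: "(nat list \<Rightarrow> nat) \<Rightarrow> (nat \<Rightarrow> nat list) \<Rightarrow> nat \<Rightarrow> nat set" where
  "descents f x r = {i. Suc i < r \<and> f (x (Suc i)) < f (x i)}"

lemma finite_descents [simp]: "finite (descents f x r)"
  unfolding descents_def by (rule finite_subset[of _ "{..<r}"]) auto

lemma card_descents_Suc:
  "card (descents f x (Suc (Suc r))) =
     card (descents f x (Suc r)) + (if f (x (Suc r)) < f (x r) then 1 else 0)"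
proof -
  have "descents f x (Suc (Suc r)) =
      descents f x (Suc r) \<union> (if f (x (Suc r)) < f (x r) then {r} else {})"
    unfolding descents_def by (auto simp: less_Suc_eq)
  moreover have "r \<notin> descents f x (Suc r)" unfolding descents_def by simp
  ultimately show ?thesis by simp
qed

lemma is_chain_snoc:
  assumes "is_chain k m c" "c \<noteq> []" "y \<in> tuples k m" "y \<notin> set c" "tle (last c) y"
  shows "is_chain k m (c @ [y])"
  unfolding is_chain_def
proof (intro conjI allI impI)
  show "set (c @ [y]) \<subseteq> tuples k m" "distinct (c @ [y])"
    using assms unfolding is_chain_def by auto
  fix i assume i: "Suc i < length (c @ [y])"
  show "tle ((c @ [y]) ! i) ((c @ [y]) ! Suc i)"
  proof (cases "Suc i < length c")
    case True
    then show ?thesis using assms(1) unfolding is_chain_def by (simp add: nth_append)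
  next
    case False
    then have "i = length c - 1" using i by simp
    then show ?thesis using assms(2,5) by (simp add: nth_append last_conv_nth)
  qed
qed

text \<open>Dropping repetitions turns a monotone sequence into a chain with the same descents.\<close>

lemma chain_of_monotone_sequence:
  assumes "\<forall>i\<le>r. x i \<in> tuples k m" "\<forall>i<r. tle (x i) (x (Suc i))"
  shows "\<exists>c. is_chain k m c \<and> c \<noteq> [] \<and> last c = x r \<and> (\<forall>y\<in>set c. tle y (x r)) \<and>
    chain_decrease {f} c = card (descents f x (Suc r))"
  using assms
proof (induction r)
  case 0
  have "descents f x 1 = {}" unfolding descents_def by simp
  then show ?case using "0.prems"
    by (intro exI[of _ "[x 0]"]) (simp add: is_chain_def tle_refl chain_decrease_def)
next
  case (Suc r)
  then obtain c where c: "is_chain k m c" "c \<noteq> []" "last c = x r" "\<forall>y\<in>set c. tle y (x r)"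
    "chain_decrease {f} c = card (descents f x (Suc r))"
    by auto
  have step: "tle (x r) (x (Suc r))" using Suc.prems by simp
  show ?case
  proof (cases "x (Suc r) = x r")
    case True
    then show ?thesis using c by (intro exI[of _ c]) (simp add: card_descents_Suc)
  next
    case False
    have "x (Suc r) \<notin> set c" using c(4) step False tle_antisym by blast
    then have "is_chain k m (c @ [x (Suc r)])"
      using c Suc.prems by (intro is_chain_snoc) auto
    moreover have "\<forall>y\<in>set (c @ [x (Suc r)]). tle y (x (Suc r))"
      using c(4) step by (auto intro: tle_trans tle_refl)
    ultimately show ?thesis using c step
      by (intro exI[of _ "c @ [x (Suc r)]"]) (simp add: chain_decrease_snoc card_descents_Suc)
  qed
qed

lemma card_descents_le_decrease:
  assumes "\<forall>i<r. x i \<in> tuples k m" "\<forall>i. Suc i < r \<longrightarrow> tle (x i) (x (Suc i))"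
  shows "card (descents f x r) \<le> decrease k m {f}"
proof (cases r)
  case 0
  then show ?thesis by (simp add: descents_def)
next
  case (Suc r')
  then obtain c where "is_chain k m c" "chain_decrease {f} c = card (descents f x r)"
    using chain_of_monotone_sequence[of r' x k m f] assms by auto
  then show ?thesis by (metis chain_decrease_le_decrease)
qed

lemma card_descents_piecewise_monotone:
  assumes "B \<subseteq> {i. Suc i < r}" "\<forall>i<r. x i \<in> tuples k m"
    "\<forall>i. Suc i < r \<and> i \<notin> B \<longrightarrow> tle (x i) (x (Suc i))"
  shows "card (descents f x r - B) \<le> (card B + 1) * decrease k m {f}"
proof -
  have "finite B" using assms(1) by (rule finite_subset) (rule finite_subset[of _ "{..<r}"], auto)
  then show ?thesis using assms
  proof (induction B arbitrary: r rule: finite_linorder_max_induct)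
    case empty
    then show ?case using card_descents_le_decrease by simp
  next
    case (insert b A)
    let ?d = "decrease k m {f}"
    define y where "y i = x (Suc b + i)" for i
    have b: "Suc b < r" "b \<notin> A" using insert.prems(1) insert.hyps(2) by auto
    have prefix: "card (descents f x (Suc b) - A) \<le> (card A + 1) * ?d"
      using insert.prems insert.hyps(2) b by (intro insert.IH) auto
    have suffix: "card (descents f y (r - Suc b)) \<le> ?d"
    proof (rule card_descents_le_decrease)
      show "\<forall>i<r - Suc b. y i \<in> tuples k m" using insert.prems(2) unfolding y_def by auto
      show "\<forall>i. Suc i < r - Suc b \<longrightarrow> tle (y i) (y (Suc i))"
      proof (intro allI impI)
        fix i assume i: "Suc i < r - Suc b"
        have "Suc b + i \<notin> insert b A" using insert.hyps(2) by fastforce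
        then show "tle (y i) (y (Suc i))" using insert.prems(3) i unfolding y_def by auto
      qed
    qed
    have "descents f x r - insert b A \<subseteq>
        (descents f x (Suc b) - A) \<union> (\<lambda>i. Suc b + i) ` descents f y (r - Suc b)"
    proof
      fix i assume i: "i \<in> descents f x r - insert b A"
      show "i \<in> (descents f x (Suc b) - A) \<union> (\<lambda>i. Suc b + i) ` descents f y (r - Suc b)"
      proof (cases "i < b")
        case True
        then show ?thesis using i by (auto simp: descents_def)
      next
        case False
        then have "i = Suc b + (i - Suc b)" "i - Suc b \<in> descents f y (r - Suc b)"
          using i by (auto simp: descents_def y_def)
        then show ?thesis by blast
      qed
    qed
    then have "card (descents f x r - insert b A) \<le>
        card ((descents f x (Suc b) - A) \<union> (\<lambda>i. Suc b + i) ` descents f y (r - Suc b))"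
      by (intro card_mono) auto
    also have "\<dots> \<le> card (descents f x (Suc b) - A) + card (descents f y (r - Suc b))"
      by (rule card_Un_le[THEN order_trans]) (simp add: card_image_le)
    also have "\<dots> \<le> (card A + 1) * ?d + ?d" using prefix suffix by (rule add_mono)
    finally show ?case using b insert.hyps(1) by (simp add: algebra_simps)
  qed
qed

definition breaks :: "(nat \<Rightarrow> nat list) \<Rightarrow> nat \<Rightarrow> nat set" where
  "breaks V r = {i. Suc i < r \<and> \<not> tle (V i) (V (Suc i))}"

lemma finite_breaks [simp]: "finite (breaks V r)"
  unfolding breaks_def by (rule finite_subset[of _ "{..<r}"]) auto

lemma breaks_append_output:
  assumes "\<forall>i<r. length (V i) = N"
  shows "breaks (\<lambda>i. V i @ [h (V i)]) r = breaks V r \<union> descents h V r"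
  using assms unfolding breaks_def descents_def by (auto simp: tle_append_singleton)

lemma circ_vals_Nil: "circ_vals \<omega> [] xs = xs"
  by (simp add: circ_vals_def)

lemma circ_vals_snoc:
  "circ_vals \<omega> (gs @ [g]) xs = circ_vals \<omega> gs xs @ [gate_apply \<omega> g (circ_vals \<omega> gs xs)]"
  by (simp add: circ_vals_def)

lemma length_circ_vals: "length (circ_vals \<omega> gs xs) = length xs + length gs"
  by (induction gs rule: rev_induct) (simp_all add: circ_vals_snoc circ_vals_Nil)

lemma circ_cost_snoc: "circ_cost (gs @ [g]) = circ_cost gs + (if is_omega_gate g then 1 else 0)"
  by (simp add: circ_cost_def)

lemma wf_circuit_snoc:
  "wf_circuit k p ar n (gs @ [g]) \<longleftrightarrow>
     wf_circuit k p ar n gs \<and> gate_ok k p ar g \<and> (\<forall>a\<in>set (gate_args g). a < n + length gs)"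
  unfolding wf_circuit_def by (auto simp: nth_append less_Suc_eq)

lemma gate_apply_in_range:
  assumes "\<forall>j<p. in_P k (ar j) (\<omega> j)" "gate_ok k p ar g" "u \<in> tuples k N"
    "\<forall>a\<in>set (gate_args g). a < N"
  shows "gate_apply \<omega> g u < k"
  using assms map_nth_in_tuples[OF assms(3)] by (cases g) (auto simp: in_P_def, metis)

lemma circ_vals_in_tuples:
  assumes "\<forall>j<p. in_P k (ar j) (\<omega> j)" "wf_circuit k p ar n gs" "xs \<in> tuples k n"
  shows "circ_vals \<omega> gs xs \<in> tuples k (n + length gs)"
  using assms(2)
proof (induction gs rule: rev_induct)
  case Nil
  then show ?case using assms(3) by (simp add: circ_vals_Nil)
next
  case (snoc g gs)
  then have "circ_vals \<omega> gs xs \<in> tuples k (n + length gs)"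
    and "gate_apply \<omega> g (circ_vals \<omega> gs xs) < k"
    using assms(1) by (auto simp: wf_circuit_snoc intro: gate_apply_in_range)
  then show ?case by (simp add: circ_vals_snoc tuples_def)
qed

lemma descents_monotone_gate_subset_breaks:
  assumes "gate_ok k p ar (MGate h as)" "\<forall>i<r. V i \<in> tuples k N" "\<forall>a\<in>set as. a < N"
  shows "descents (gate_apply \<omega> (MGate h as)) V r \<subseteq> breaks V r"
proof
  fix i assume i: "i \<in> descents (gate_apply \<omega> (MGate h as)) V r"
  show "i \<in> breaks V r"
  proof (rule ccontr)
    assume "i \<notin> breaks V r"
    then have "tle (V i) (V (Suc i))" using i unfolding breaks_def descents_def by simp
    moreover have "V i \<in> tuples k N" "V (Suc i) \<in> tuples k N"
      using i assms(2) unfolding descents_def by auto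
    ultimately have "tle (map (\<lambda>j. V i ! j) as) (map (\<lambda>j. V (Suc i) ! j) as)"
      "map (\<lambda>j. V i ! j) as \<in> tuples k (length as)"
      "map (\<lambda>j. V (Suc i) ! j) as \<in> tuples k (length as)"
      using assms(3) by (auto simp: tuples_def intro: tle_map_nth map_nth_in_tuples)
    then have "h (map (\<lambda>j. V i ! j) as) \<le> h (map (\<lambda>j. V (Suc i) ! j) as)"
      using assms(1) by (auto simp: monotone_fun_def)
    then show False using i unfolding descents_def by simp
  qed
qed

lemma card_descents_omega_gate:
  assumes "gate_ok k p ar (OGate j as)" "\<forall>i<r. V i \<in> tuples k N" "\<forall>a\<in>set as. a < N"
  shows "card (descents (gate_apply \<omega> (OGate j as)) V r - breaks V r)
    \<le> (card (breaks V r) + 1) * decrease k (ar j) {\<omega> j}"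
proof -
  define y where "y i = map (\<lambda>a. V i ! a) as" for i
  have "descents (gate_apply \<omega> (OGate j as)) V r = descents (\<omega> j) y r"
    unfolding descents_def y_def by simp
  moreover have "card (descents (\<omega> j) y r - breaks V r) \<le> (card (breaks V r) + 1) * decrease k (ar j) {\<omega> j}"
  proof (rule card_descents_piecewise_monotone)
    show "breaks V r \<subseteq> {i. Suc i < r}" unfolding breaks_def by auto
    show "\<forall>i<r. y i \<in> tuples k (ar j)"
      using assms map_nth_in_tuples unfolding y_def by fastforce
    show "\<forall>i. Suc i < r \<and> i \<notin> breaks V r \<longrightarrow> tle (y i) (y (Suc i))"
      using assms(2,3) unfolding y_def breaks_def by (auto simp: tuples_def intro: tle_map_nth)
  qed
  ultimately show ?thesis by simp
qed

lemma card_breaks_circ_vals: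
  assumes "\<forall>j<p. in_P k (ar j) (\<omega> j)" "\<forall>j<p. decrease k (ar j) {\<omega> j} \<le> D"
    and "\<forall>i<r. x i \<in> tuples k n" "\<forall>i. Suc i < r \<longrightarrow> tle (x i) (x (Suc i))"
    and "wf_circuit k p ar n gs"
  shows "card (breaks (\<lambda>i. circ_vals \<omega> gs (x i)) r) + 1 \<le> (D + 1) ^ circ_cost gs"
  using assms(5)
proof (induction gs rule: rev_induct)
  case Nil
  have "breaks (\<lambda>i. circ_vals \<omega> [] (x i)) r = {}"
    using assms(4) by (auto simp: breaks_def circ_vals_Nil)
  then show ?case by (simp add: circ_cost_def)
next
  case (snoc g gs)
  define V where "V i = circ_vals \<omega> gs (x i)" for i
  have wf: "wf_circuit k p ar n gs" "gate_ok k p ar g" "\<forall>a\<in>set (gate_args g). a < n + length gs"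
    using snoc.prems by (auto simp: wf_circuit_snoc)
  have IH: "card (breaks V r) + 1 \<le> (D + 1) ^ circ_cost gs"
    using snoc.IH wf(1) unfolding V_def .
  have VT: "\<forall>i<r. V i \<in> tuples k (n + length gs)"
    using assms(1,3) wf(1) unfolding V_def by (auto intro: circ_vals_in_tuples)
  then have "breaks (\<lambda>i. circ_vals \<omega> (gs @ [g]) (x i)) r
      = breaks V r \<union> (descents (gate_apply \<omega> g) V r - breaks V r)"
    unfolding circ_vals_snoc V_def[symmetric]
    by (subst breaks_append_output[where N = "n + length gs"]) (auto simp: tuples_def)
  then have new: "card (breaks (\<lambda>i. circ_vals \<omega> (gs @ [g]) (x i)) r)
      \<le> card (breaks V r) + card (descents (gate_apply \<omega> g) V r - breaks V r)"
    by (metis card_Un_le)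
  show ?case
  proof (cases g)
    case (MGate h as)
    then have "card (descents (gate_apply \<omega> g) V r - breaks V r) = 0"
      using descents_monotone_gate_subset_breaks[OF _ VT] wf by auto
    then have "card (breaks (\<lambda>i. circ_vals \<omega> (gs @ [g]) (x i)) r) \<le> card (breaks V r)"
      using new by linarith
    then show ?thesis using IH MGate by (simp add: circ_cost_snoc)
  next
    case (OGate j as)
    have "card (descents (gate_apply \<omega> g) V r - breaks V r)
        \<le> (card (breaks V r) + 1) * decrease k (ar j) {\<omega> j}"
      using card_descents_omega_gate[OF _ VT] wf OGate by simp
    also have "\<dots> \<le> (card (breaks V r) + 1) * D"
      using assms(2) wf(2) OGate by (intro mult_left_mono) auto
    finally have "card (breaks (\<lambda>i. circ_vals \<omega> (gs @ [g]) (x i)) r) + 1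
        \<le> (card (breaks V r) + 1) * (D + 1)"
      using new by (simp add: algebra_simps)
    also have "\<dots> \<le> (D + 1) ^ circ_cost gs * (D + 1)"
      using IH by (rule mult_right_mono) simp
    finally show ?thesis using OGate by (simp add: circ_cost_snoc mult.commute)
  qed
qed

lemma chain_decrease_le_card_breaks:
  assumes "is_chain k n c" "realizes k \<omega> n gs F"
  shows "chain_decrease F c \<le> card (breaks (\<lambda>i. circ_vals \<omega> gs (c ! i)) (length c))"
  unfolding chain_decrease_def
proof (rule card_mono)
  show "{i. Suc i < length c \<and> is_jump F (c ! i) (c ! Suc i)}
      \<subseteq> breaks (\<lambda>i. circ_vals \<omega> gs (c ! i)) (length c)"
  proof clarify
    fix i assume i: "Suc i < length c" "is_jump F (c ! i) (c ! Suc i)"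
    then obtain f where f: "f \<in> F" "f (c ! Suc i) < f (c ! i)"
      unfolding is_jump_def by auto
    then obtain v where v: "v < n + length gs" "\<forall>xs\<in>tuples k n. circ_vals \<omega> gs xs ! v = f xs"
      using assms(2) unfolding realizes_def by blast
    have c: "c ! i \<in> tuples k n" "c ! Suc i \<in> tuples k n"
      using assms(1) i(1) unfolding is_chain_def by auto
    have "\<not> tle (circ_vals \<omega> gs (c ! i)) (circ_vals \<omega> gs (c ! Suc i))"
    proof
      assume "tle (circ_vals \<omega> gs (c ! i)) (circ_vals \<omega> gs (c ! Suc i))"
      then have "circ_vals \<omega> gs (c ! i) ! v \<le> circ_vals \<omega> gs (c ! Suc i) ! v"
        using v(1) c by (intro tle_nth) (auto simp: length_circ_vals tuples_def)
      then show False using v(2) c f(2) by simp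
    qed
    then show "i \<in> breaks (\<lambda>i. circ_vals \<omega> gs (c ! i)) (length c)"
      using i(1) unfolding breaks_def by simp
  qed
qed simp

lemma nat_ceiling_log_le:
  fixes a D t :: nat assumes "a + 1 \<le> (D + 1) ^ t"
  shows "nat \<lceil>log (real (D + 1)) (real (a + 1))\<rceil> \<le> t"
proof (cases "D = 0")
  case True
  then show ?thesis by (simp add: log_def)
next
  case False
  then have base: "1 < real (D + 1)" by simp
  have "real (a + 1) \<le> real (D + 1) ^ t" using assms by (metis of_nat_le_iff of_nat_power)
  then have "log (real (D + 1)) (real (a + 1)) \<le> real t"
    using base by (subst log_le_iff) (auto simp: powr_realpow)
  then show ?thesis by (simp add: ceiling_le_iff nat_le_iff)
qed

theorem theorem1:
  fixes k p n :: nat and \<omega> :: "nat \<Rightarrow> nat list \<Rightarrow> nat" and ar :: "nat \<Rightarrow> nat"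
    and F :: "(nat list \<Rightarrow> nat) set"
  assumes "k \<ge> 2" and "p \<ge> 1"
    and "\<forall>i<p. in_P k (ar i) (\<omega> i) \<and> \<not> monotone_fun k (ar i) (\<omega> i)"
    and "finite F" and "\<forall>f\<in>F. in_P k n f"
  shows "I_B k p \<omega> ar n F \<ge>
     enat (nat \<lceil>log (real (decrease_B k p \<omega> ar + 1)) (real (decrease k n F + 1))\<rceil>)"
  \<comment> \<open>Only the range condition on the \<open>\<omega>\<^sub>i\<close> is needed; for \<open>d(B) = 0\<close> the logarithm is junk (0).\<close>
proof -
  let ?D = "decrease_B k p \<omega> ar"
  have range: "\<forall>j<p. in_P k (ar j) (\<omega> j)" using assms(3) by simp
  have dec: "\<forall>j<p. decrease k (ar j) {\<omega> j} \<le> ?D"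
    unfolding decrease_B_def by (auto intro: Max_ge)
  obtain c where c: "is_chain k n c" "chain_decrease F c = decrease k n F"
    by (rule decrease_attained)
  then have "\<forall>i<length c. c ! i \<in> tuples k n" "\<forall>i. Suc i < length c \<longrightarrow> tle (c ! i) (c ! Suc i)"
    unfolding is_chain_def by auto
  note breaks_bound = card_breaks_circ_vals[OF range dec this]
  show ?thesis unfolding I_B_def
  proof (rule INF_greatest)
    fix gs assume "gs \<in> {gs. wf_circuit k p ar n gs \<and> realizes k \<omega> n gs F}"
    then have wf: "wf_circuit k p ar n gs" and re: "realizes k \<omega> n gs F" by auto
    have "decrease k n F + 1 \<le> card (breaks (\<lambda>i. circ_vals \<omega> gs (c ! i)) (length c)) + 1"
      using chain_decrease_le_card_breaks[OF c(1) re] c(2) by simp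
    also have "\<dots> \<le> (?D + 1) ^ circ_cost gs" using breaks_bound wf .
    finally show "enat (nat \<lceil>log (real (?D + 1)) (real (decrease k n F + 1))\<rceil>) \<le> enat (circ_cost gs)"
      using nat_ceiling_log_le by simp
  qed
qed

end
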